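(* Let $M(C,\bar\xi,\pi)$ be a Myller configuration with Darboux frame $(\bar\xi,\bar\mu,\bar v)$ and invariants $G,K,T$, $(G,T)\neq(0,0)$ everywhere, and suppose $C$ is a $W_r$-helix with fixed unit axis $\bar l_r$ and constant angle $\vartheta$, $\langle\bar W_r,\bar l_r\rangle=\cos\vartheta$. Then, for one choice of sign, $$\bar l_r=\cos\vartheta\frac{T}{\sqrt{G^2+T^2}}\bar\xi\mp(\sin\vartheta)\bar\mu+\cos\vartheta\frac{G}{\sqrt{G^2+T^2}}\bar v.$$
   Context: Let $C$ be a smooth curve in $E^3$ parametrized by arclength $s$; primes denote $d/ds$. A Myller configuration $M(C,\bar\xi,\pi)$ consists of a smooth unit vector field $\bar\xi$ along $C$ and a smooth oriented plane field $\pi$ with $\bar\xi\in\pi$; $\bar v$ is the unit normal of $\pi$, $\bar\mu=\bar v\times\bar\xi$, and $\bar\xi'=G\bar\mu+K\bar v$, $\bar\mu'=-G\bar\xi+T\bar v$, $\bar v'=-K\bar\xi-T\bar\mu$. The RD-vector is $W_r=T\bar\xi+G\bar v$, $\bar W_r=W_r/\|W_r\|$; $C$ is a $W_r$-helix if there are a constant unit vector $\bar l_r$ (axis) and constant $\vartheta$ with $\langle\bar W_r,\bar l_r\rangle=\cos\vartheta$ along $C$.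
   Formalization: The derivative of $\bar W_r$ with respect to s is also nonzero at every point of C, and the sign in $\mp$ is one choice fixed along all of C rather than pointwise. Apart from conventions, each condition added here is assumed in the paper as well or is needed for the statement above to hold. *)

theory Defs
  imports "HOL-Analysis.Analysis"
begin

text \<open>Myller configuration along a curve parametrized by arclength s on an open interval I.
  xi = unit vector field, nu = unit normal of the plane field pi, mu = nu x xi.\<close>

definition myller_config ::
  "real set \<Rightarrow> (real \<Rightarrow> real^3) \<Rightarrow> (real \<Rightarrow> real^3) \<Rightarrow> (real \<Rightarrow> real^3) \<Rightarrow> (real \<Rightarrow> real^3)
   \<Rightarrow> (real \<Rightarrow> real) \<Rightarrow> (real \<Rightarrow> real) \<Rightarrow> (real \<Rightarrow> real) \<Rightarrow> bool" where
  "myller_config I r xi mu nu G K T \<longleftrightarrow>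
     (\<forall>s\<in>I.
        (r has_vector_derivative vector_derivative r (at s)) (at s) \<and>
        norm (vector_derivative r (at s)) = 1 \<and>
        norm (xi s) = 1 \<and> norm (nu s) = 1 \<and> xi s \<bullet> nu s = 0 \<and>
        mu s = cross3 (nu s) (xi s) \<and>
        (xi has_vector_derivative (G s *\<^sub>R mu s + K s *\<^sub>R nu s)) (at s) \<and>
        (mu has_vector_derivative (- G s *\<^sub>R xi s + T s *\<^sub>R nu s)) (at s) \<and>
        (nu has_vector_derivative (- K s *\<^sub>R xi s - T s *\<^sub>R mu s)) (at s) \<and>
        G differentiable (at s) \<and> K differentiable (at s) \<and> T differentiable (at s))"

definition RD_vector ::
  "(real \<Rightarrow> real^3) \<Rightarrow> (real \<Rightarrow> real^3) \<Rightarrow> (real \<Rightarrow> real) \<Rightarrow> (real \<Rightarrow> real) \<Rightarrow> real \<Rightarrow> real^3" where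
  "RD_vector xi nu G T s = T s *\<^sub>R xi s + G s *\<^sub>R nu s"

definition RD_unit ::
  "(real \<Rightarrow> real^3) \<Rightarrow> (real \<Rightarrow> real^3) \<Rightarrow> (real \<Rightarrow> real) \<Rightarrow> (real \<Rightarrow> real) \<Rightarrow> real \<Rightarrow> real^3" where
  "RD_unit xi nu G T s = (1 / norm (RD_vector xi nu G T s)) *\<^sub>R RD_vector xi nu G T s"

definition Wr_helix_axis ::
  "real set \<Rightarrow> (real \<Rightarrow> real^3) \<Rightarrow> (real \<Rightarrow> real^3) \<Rightarrow> (real \<Rightarrow> real) \<Rightarrow> (real \<Rightarrow> real)
   \<Rightarrow> real^3 \<Rightarrow> real \<Rightarrow> bool" where
  "Wr_helix_axis I xi nu G T l \<theta> \<longleftrightarrow>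
     norm l = 1 \<and> (\<forall>s\<in>I. RD_unit xi nu G T s \<bullet> l = cos \<theta>)"

end

theory Submission
  imports Defs
begin

text \<open>Let U be the unit RD-vector. The inner products U \<bullet> l, U \<bullet> U and U \<bullet> mu
  are constant along C (the last one is 0, since U lies in the plane of xi and nu), and
  U \<bullet> mu' = 0 by the frame equations, so differentiating them shows that U' is orthogonal
  to l, U and mu. As U' \<noteq> 0 and U, mu are orthonormal, l lies in the plane of U and mu:
  l = cos \<theta> U + (l \<bullet> mu) mu with (l \<bullet> mu)^2 = (sin \<theta>)^2. The continuous function
  l \<bullet> mu thus takes only the values \<plusminus>sin \<theta> on an interval, hence is constant.\<close>

lemma cross3_cross3_left: "cross3 (cross3 a b) c = (a \<bullet> c) *\<^sub>R b - (b \<bullet> c) *\<^sub>R a"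
  for a b c :: "real^3"
  by (simp add: cross3_simps forall_3)

lemma inner_cross3_self_of_orthonormal:
  fixes u m :: "real^3"
  assumes "norm u = 1" "norm m = 1" "u \<bullet> m = 0"
  shows "cross3 u m \<bullet> cross3 u m = 1"
  using norm_cross_dot[of u m] assms by (simp add: power2_norm_eq_inner[symmetric])

lemma orthonormal_cross3_expansion:
  fixes u m v :: "real^3"
  assumes "norm u = 1" "norm m = 1" "u \<bullet> m = 0"
  shows "v = (v \<bullet> u) *\<^sub>R u + (v \<bullet> m) *\<^sub>R m + (v \<bullet> cross3 u m) *\<^sub>R cross3 u m"
proof -
  define c where "c = cross3 u m"
  define w where "w = v - (v \<bullet> u) *\<^sub>R u - (v \<bullet> m) *\<^sub>R m"
  have "u \<bullet> u = 1" "m \<bullet> m = 1" using assms by (simp_all add: norm_eq_1)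
  then have "w \<bullet> u = 0" "w \<bullet> m = 0"
    using assms(3) unfolding w_def by (simp_all add: inner_diff_left inner_diff_right inner_commute)
  then have "cross3 c w = 0"
    unfolding c_def cross3_cross3_left by (simp add: inner_commute)
  moreover have "c \<bullet> c = 1"
    unfolding c_def by (rule inner_cross3_self_of_orthonormal[OF assms])
  then have "cross3 c (cross3 c w) = (c \<bullet> w) *\<^sub>R c - w"
    by (subst cross_skew) (simp add: cross3_cross3_left inner_commute)
  ultimately have "w = (c \<bullet> w) *\<^sub>R c" by simp
  moreover have "c \<bullet> w = v \<bullet> c"
    unfolding w_def c_def by (simp add: inner_diff_right dot_cross_self inner_commute)
  ultimately show ?thesis unfolding w_def c_def by (simp add: algebra_simps)
qed

lemma orthonormal_pair_expansion_if_orthogonal: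
  fixes u m d v :: "real^3"
  assumes "norm u = 1" "norm m = 1" "u \<bullet> m = 0"
    and "d \<noteq> 0" "d \<bullet> u = 0" "d \<bullet> m = 0" "d \<bullet> v = 0"
  shows "v = (v \<bullet> u) *\<^sub>R u + (v \<bullet> m) *\<^sub>R m"
proof -
  let ?c = "cross3 u m"
  have d: "d = (d \<bullet> ?c) *\<^sub>R ?c"
    using orthonormal_cross3_expansion[OF assms(1-3), of d] assms(5,6) by simp
  have v: "v = (v \<bullet> u) *\<^sub>R u + (v \<bullet> m) *\<^sub>R m + (v \<bullet> ?c) *\<^sub>R ?c"
    using orthonormal_cross3_expansion[OF assms(1-3)] .
  have "d \<bullet> ?c \<noteq> 0" using d assms(4) by (metis scale_zero_left)
  moreover have "d \<bullet> v = (d \<bullet> ?c) * (v \<bullet> ?c)"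
    by (subst d) (simp add: inner_commute)
  ultimately have "v \<bullet> ?c = 0" using assms(7) by simp
  then show ?thesis using v by simp
qed

lemma inner_orthonormal_combination_self:
  fixes u m :: "'a::real_inner"
  assumes "norm u = 1" "norm m = 1" "u \<bullet> m = 0"
  shows "(a *\<^sub>R u + b *\<^sub>R m) \<bullet> (a *\<^sub>R u + b *\<^sub>R m) = a\<^sup>2 + b\<^sup>2"
  using assms by (simp add: norm_eq_1 inner_add_left inner_add_right inner_commute power2_eq_square)

lemma inner_derivative_eq_0_if_inner_constant_on:
  fixes f g :: "real \<Rightarrow> 'a::real_inner"
  assumes "(f has_vector_derivative f') (at s)" "(g has_vector_derivative g') (at s)"
    and "open S" "s \<in> S" "\<And>y. y \<in> S \<Longrightarrow> f y \<bullet> g y = c"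
  shows "f s \<bullet> g' + f' \<bullet> g s = 0"
proof -
  have "((\<lambda>y. f y \<bullet> g y) has_vector_derivative f s \<bullet> g' + f' \<bullet> g s) (at s)"
    by (rule bounded_bilinear.has_vector_derivative[OF bounded_bilinear_inner assms(1,2)])
  then have "((\<lambda>y. c) has_vector_derivative f s \<bullet> g' + f' \<bullet> g s) (at s)"
    by (rule has_vector_derivative_transform_within_open[OF _ assms(3,4)]) (use assms(5) in auto)
  then show ?thesis
    using vector_derivative_unique_at[OF _ has_vector_derivative_const] by blast
qed

lemma continuous_on_plus_minus_valued_constant_on:
  fixes f :: "'a::topological_space \<Rightarrow> real"
  assumes "connected S" "continuous_on S f" "\<And>x. x \<in> S \<Longrightarrow> f x = c \<or> f x = - c"
  shows "f constant_on S"
proof -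
  have "f ` S \<subseteq> {c, - c}" using assms(3) by blast
  then have "finite (f ` S)" by (rule finite_subset) simp
  then show ?thesis by (rule continuous_finite_range_constant[OF assms(1,2)])
qed

lemma myller_configD:
  assumes "myller_config I r xi mu nu G K T" "s \<in> I"
  shows "norm (xi s) = 1" "norm (nu s) = 1" "xi s \<bullet> nu s = 0"
    and "mu s = cross3 (nu s) (xi s)"
    and "(xi has_vector_derivative (G s *\<^sub>R mu s + K s *\<^sub>R nu s)) (at s)"
    and "(mu has_vector_derivative (- G s *\<^sub>R xi s + T s *\<^sub>R nu s)) (at s)"
    and "(nu has_vector_derivative (- K s *\<^sub>R xi s - T s *\<^sub>R mu s)) (at s)"
    and "G differentiable (at s)" "T differentiable (at s)"
  using assms unfolding myller_config_def by blast+

lemma myller_config_norm_mu: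
  assumes "myller_config I r xi mu nu G K T" "s \<in> I"
  shows "norm (mu s) = 1"
  using inner_cross3_self_of_orthonormal[of "nu s" "xi s"] myller_configD[OF assms]
  by (simp add: norm_eq_1 inner_commute)

lemma myller_config_norm_RD_vector:
  assumes "myller_config I r xi mu nu G K T" "s \<in> I"
  shows "norm (RD_vector xi nu G T s) = sqrt ((G s)\<^sup>2 + (T s)\<^sup>2)"
proof -
  have "xi s \<bullet> xi s = 1" "nu s \<bullet> nu s = 1" "xi s \<bullet> nu s = 0"
    using myller_configD(1-3)[OF assms] by (simp_all add: norm_eq_1)
  then show ?thesis
    unfolding norm_eq_sqrt_inner RD_vector_def
    by (simp add: inner_add_left inner_add_right inner_commute power2_eq_square)
qed

lemma myller_config_RD_unit_eq:
  assumes "myller_config I r xi mu nu G K T" "s \<in> I"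
  shows "RD_unit xi nu G T s
           = (1 / sqrt ((G s)\<^sup>2 + (T s)\<^sup>2)) *\<^sub>R (T s *\<^sub>R xi s + G s *\<^sub>R nu s)"
  using myller_config_norm_RD_vector[OF assms] unfolding RD_unit_def RD_vector_def by simp

lemma myller_config_norm_RD_unit:
  assumes "myller_config I r xi mu nu G K T" "s \<in> I" "(G s, T s) \<noteq> (0, 0)"
  shows "norm (RD_unit xi nu G T s) = 1"
  using myller_config_norm_RD_vector[OF assms(1,2)] assms(3) unfolding RD_unit_def by auto

lemma myller_config_RD_unit_inner_mu:
  assumes "myller_config I r xi mu nu G K T" "s \<in> I"
  shows "RD_unit xi nu G T s \<bullet> mu s = 0"
  unfolding myller_config_RD_unit_eq[OF assms] myller_configD(4)[OF assms]
  by (simp add: inner_add_left dot_cross_self)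

lemma myller_config_RD_unit_inner_mu_derivative:
  assumes "myller_config I r xi mu nu G K T" "s \<in> I"
  shows "RD_unit xi nu G T s \<bullet> (- G s *\<^sub>R xi s + T s *\<^sub>R nu s) = 0"
proof -
  have "xi s \<bullet> xi s = 1" "nu s \<bullet> nu s = 1" "xi s \<bullet> nu s = 0"
    using myller_configD(1-3)[OF assms] by (simp_all add: norm_eq_1)
  then show ?thesis
    unfolding myller_config_RD_unit_eq[OF assms]
    by (simp add: inner_add_left inner_add_right inner_commute algebra_simps)
qed

lemma myller_config_RD_unit_differentiable:
  assumes "myller_config I r xi mu nu G K T" "s \<in> I" "(G s, T s) \<noteq> (0, 0)"
  shows "RD_unit xi nu G T differentiable (at s)"
proof -
  let ?V = "RD_vector xi nu G T"
  have "xi differentiable (at s)" "nu differentiable (at s)"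
    using myller_configD(5,7)[OF assms(1,2)] by (auto intro: differentiableI_vector)
  then have "?V differentiable (at s)"
    unfolding RD_vector_def[abs_def] using myller_configD(8,9)[OF assms(1,2)]
    by (intro differentiable_add differentiable_scaleR)
  moreover have "?V s \<noteq> 0"
    using myller_config_norm_RD_vector[OF assms(1,2)] assms(3) by auto
  ultimately show ?thesis
    unfolding RD_unit_def[abs_def]
    by (intro differentiable_scaleR differentiable_divide differentiable_compose[OF differentiable_norm_at]) auto
qed

lemma Wr_helix_axis_decomposition:
  assumes M: "myller_config I r xi mu nu G K T" and "open I" and s: "s \<in> I"
    and GT: "\<forall>s\<in>I. (G s, T s) \<noteq> (0, 0)"
    and H: "Wr_helix_axis I xi nu G T l \<theta>"
    and D0: "vector_derivative (RD_unit xi nu G T) (at s) \<noteq> 0"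
  shows "l = cos \<theta> *\<^sub>R RD_unit xi nu G T s + (l \<bullet> mu s) *\<^sub>R mu s"
    and "(l \<bullet> mu s)\<^sup>2 = (sin \<theta>)\<^sup>2"
proof -
  let ?U = "RD_unit xi nu G T"
  define D where "D = vector_derivative ?U (at s)"
  have U': "(?U has_vector_derivative D) (at s)"
    unfolding D_def using myller_config_RD_unit_differentiable[OF M s] GT s
    by (simp add: vector_derivative_works)
  have l1: "norm l = 1" and Ul: "\<And>y. y \<in> I \<Longrightarrow> ?U y \<bullet> l = cos \<theta>"
    using H unfolding Wr_helix_axis_def by auto
  have U1: "\<And>y. y \<in> I \<Longrightarrow> ?U y \<bullet> ?U y = 1"
    using myller_config_norm_RD_unit[OF M] GT by (simp add: norm_eq_1)
  have "D \<bullet> l = 0"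
    using inner_derivative_eq_0_if_inner_constant_on[OF U' has_vector_derivative_const \<open>open I\<close> s Ul]
    by simp
  moreover have "D \<bullet> ?U s = 0"
    using inner_derivative_eq_0_if_inner_constant_on[OF U' U' \<open>open I\<close> s U1]
    by (simp add: inner_commute)
  moreover have "D \<bullet> mu s = 0"
    using inner_derivative_eq_0_if_inner_constant_on[OF U' myller_configD(6)[OF M s] \<open>open I\<close> s
        myller_config_RD_unit_inner_mu[OF M]]
      myller_config_RD_unit_inner_mu_derivative[OF M s]
    by simp
  moreover have frame: "norm (?U s) = 1" "norm (mu s) = 1" "?U s \<bullet> mu s = 0"
    using myller_config_norm_RD_unit[OF M s] GT s myller_config_norm_mu[OF M s]
      myller_config_RD_unit_inner_mu[OF M s] by auto
  ultimately have "l = (l \<bullet> ?U s) *\<^sub>R ?U s + (l \<bullet> mu s) *\<^sub>R mu s"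
    using D0 orthonormal_pair_expansion_if_orthogonal unfolding D_def by blast
  then show "l = cos \<theta> *\<^sub>R ?U s + (l \<bullet> mu s) *\<^sub>R mu s"
    using Ul[OF s] by (simp add: inner_commute)
  then have "l \<bullet> l = (cos \<theta>)\<^sup>2 + (l \<bullet> mu s)\<^sup>2"
    using inner_orthonormal_combination_self[OF frame] by metis
  then show "(l \<bullet> mu s)\<^sup>2 = (sin \<theta>)\<^sup>2"
    using l1 sin_cos_squared_add[of \<theta>] unfolding norm_eq_1 by linarith
qed

theorem corollary22:
  fixes a b :: real
    and r xi mu nu :: "real \<Rightarrow> real^3"
    and G K T :: "real \<Rightarrow> real"
    and l :: "real^3" and \<theta> :: real
  assumes "a < b"
    and "myller_config {a<..<b} r xi mu nu G K T"
    and "\<forall>s\<in>{a<..<b}. (G s, T s) \<noteq> (0, 0)"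
    and "Wr_helix_axis {a<..<b} xi nu G T l \<theta>"
    and "\<forall>s\<in>{a<..<b}. vector_derivative (RD_unit xi nu G T) (at s) \<noteq> 0"
  shows "\<exists>\<sigma>::real. (\<sigma> = 1 \<or> \<sigma> = -1) \<and>
           (\<forall>s\<in>{a<..<b}.
              l = (cos \<theta> * T s / sqrt ((G s)\<^sup>2 + (T s)\<^sup>2)) *\<^sub>R xi s
                  - (\<sigma> * sin \<theta>) *\<^sub>R mu s
                  + (cos \<theta> * G s / sqrt ((G s)\<^sup>2 + (T s)\<^sup>2)) *\<^sub>R nu s)"
proof -
  let ?I = "{a<..<b}" and ?\<beta> = "\<lambda>s. l \<bullet> mu s"
  note axis = Wr_helix_axis_decomposition[OF assms(2) open_greaterThanLessThan _ assms(3,4)]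
  have sign: "?\<beta> s = sin \<theta> \<or> ?\<beta> s = - sin \<theta>" if "s \<in> ?I" for s
    using axis(2)[OF that] assms(5) that power2_eq_iff by blast
  have "continuous_on ?I mu"
    using has_vector_derivative_continuous myller_configD(6)[OF assms(2)]
    by (blast intro: continuous_at_imp_continuous_on)
  then have "continuous_on ?I ?\<beta>"
    by (intro continuous_on_inner continuous_on_const)
  then have "?\<beta> constant_on ?I"
    using continuous_on_plus_minus_valued_constant_on[OF connected_Ioo] sign by blast
  then obtain k where k: "\<And>s. s \<in> ?I \<Longrightarrow> ?\<beta> s = k"
    unfolding constant_on_def by blast
  obtain s0 where "s0 \<in> ?I" using \<open>a < b\<close> dense by auto
  then have "k = sin \<theta> \<or> k = - sin \<theta>"
    using sign k by metis
  then obtain \<sigma> :: real where \<sigma>: "\<sigma> = 1 \<or> \<sigma> = -1" "k = - (\<sigma> * sin \<theta>)"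
    by (metis mult_minus_left mult_1 minus_minus)
  have "l = (cos \<theta> * T s / sqrt ((G s)\<^sup>2 + (T s)\<^sup>2)) *\<^sub>R xi s - (\<sigma> * sin \<theta>) *\<^sub>R mu s
              + (cos \<theta> * G s / sqrt ((G s)\<^sup>2 + (T s)\<^sup>2)) *\<^sub>R nu s" if "s \<in> ?I" for s
  proof -
    have "l = cos \<theta> *\<^sub>R RD_unit xi nu G T s + k *\<^sub>R mu s"
      using axis(1)[OF that] assms(5) that k[OF that] by metis
    then show ?thesis
      unfolding myller_config_RD_unit_eq[OF assms(2) that] \<sigma>(2) by (simp add: algebra_simps)
  qed
  with \<sigma>(1) show ?thesis by blast
qed

end
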